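(* Let $G=(G_1,\dots,G_n)$ be a mean zero Gaussian vector with strictly positive definite covariance matrix $\Gamma$, and $\alpha\in\mathbb R$. For $t>0$ and a diagonal matrix $S$ with diagonal entries in $[0,1]$, let $\Lambda=t(I-S)$, let $\Phi(t,S)=\log\mathbb E[\exp(-\frac12\sum_i\Lambda_{i,i}(G_i+\alpha)^2)]$, $\Phi_1(t,S)=\Phi(t,S)|_{\alpha=0}$, $\Phi_2=\Phi-\Phi_1$, and $Q=[I+(t\Gamma)^{-1}]^{-1}$. Then for all $t$ sufficiently large, $$\Phi_2(t,S)=\frac{\alpha^2t}{2}\,\mathbf 1\cdot\Big[(Q-I)+(I-Q^{-1})\Big(\sum_{m=1}^\infty(QS)^m\Big)(Q-I)\Big]\cdot\mathbf 1^T,$$ where $\mathbf 1=(1,\dots,1)$.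
   Context: $\Phi_2$ is regarded as a power series in the diagonal entries of $S$ about $S=0$. *)

theory Defs
  imports "HOL-Probability.Probability"
begin

definition gauss_density :: "real^'n^'n \<Rightarrow> real^'n \<Rightarrow> real" where
  "gauss_density \<Gamma> x =
     exp (- (1/2) * (x \<bullet> (matrix_inv \<Gamma> *v x))) / sqrt ((2*pi) ^ CARD('n) * det \<Gamma>)"

definition matpow :: "real^'n^'n \<Rightarrow> nat \<Rightarrow> real^'n^'n" where
  "matpow A m = ((\<lambda>B. A ** B) ^^ m) (mat 1)"

definition Phi :: "'a measure \<Rightarrow> ('a \<Rightarrow> real^'n) \<Rightarrow> real \<Rightarrow> real \<Rightarrow> real^'n^'n \<Rightarrow> real" where
  "Phi M G \<alpha> t S =
     (let \<Lambda> = t *\<^sub>R (mat 1 - S) in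
      ln (\<integral>\<omega>. exp (- (1/2) * (\<Sum>i\<in>UNIV. \<Lambda>$i$i * (G \<omega> $ i + \<alpha>)\<^sup>2)) \<partial>M))"

definition Phi2 :: "'a measure \<Rightarrow> ('a \<Rightarrow> real^'n) \<Rightarrow> real \<Rightarrow> real \<Rightarrow> real^'n^'n \<Rightarrow> real" where
  "Phi2 M G \<alpha> t S = Phi M G \<alpha> t S - Phi M G 0 t S"

end

theory Submission
  imports Defs
begin

text \<open>Put \<open>\<Lambda> = t(I - S)\<close> and \<open>P = \<Gamma>\<^sup>-\<^sup>1\<close>. Completing the square in the Gaussian
  density shows that shifting \<open>G\<close> by \<open>a = \<alpha>(1,\<dots>,1)\<close> multiplies
  \<open>E[exp(-\<onehalf>(G + a)\<Lambda>(G + a))]\<close> by \<open>exp(\<onehalf> a(\<Lambda>(\<Lambda> + P)\<^sup>-\<^sup>1\<Lambda> - \<Lambda>)a)\<close>, so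
  \<open>\<Phi>\<^sub>2\<close> is this quadratic form. Now \<open>\<Lambda> + P = t(W - S)\<close> with \<open>W = I + (t\<Gamma>)\<^sup>-\<^sup>1 = Q\<^sup>-\<^sup>1\<close>,
  and \<open>(W - S)\<^sup>-\<^sup>1W = (I - QS)\<^sup>-\<^sup>1\<close> is the Neumann series \<open>I + \<Sum>\<^sub>m\<^sub>\<ge>\<^sub>1 (QS)\<^sup>m\<close>: it converges
  because \<open>Q\<close> is a strict contraction and \<open>S\<close> has operator norm at most 1. A short
  ring computation then yields the stated form, for every \<open>t > 0\<close>.\<close>

lemma matrix_add_rdistrib: "((A::real^'n^'m) + B) ** C = A ** C + B ** C"
  by (vector matrix_matrix_mult_def sum.distrib[symmetric] field_simps)

lemma matrix_diff_ldistrib: "(A::real^'n^'m) ** (B - C) = A ** B - A ** C"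
  by (vector matrix_matrix_mult_def sum_subtractf[symmetric] field_simps)

lemma matrix_diff_rdistrib: "((A::real^'n^'m) - B) ** C = A ** C - B ** C"
  by (vector matrix_matrix_mult_def sum_subtractf[symmetric] field_simps)

lemma
  fixes A :: "real^'n^'n"
  assumes "invertible A"
  shows matrix_inv_right: "A ** matrix_inv A = mat 1"
    and matrix_inv_left: "matrix_inv A ** A = mat 1"
  using someI_ex[OF assms[unfolded invertible_def]] unfolding matrix_inv_def by auto

lemma matrix_inv_eq_left_inverse:
  fixes A B :: "real^'n^'n"
  assumes "B ** A = mat 1"
  shows "matrix_inv A = B"
proof -
  have "invertible A" using assms invertible_left_inverse by blast
  have "matrix_inv A = (B ** A) ** matrix_inv A" using assms by simp
  also have "\<dots> = B" using matrix_inv_right[OF \<open>invertible A\<close>] by (metis matrix_mul_assoc matrix_mul_rid)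
  finally show ?thesis .
qed

lemma matrix_inv_scaleR:
  fixes A :: "real^'n^'n"
  assumes "invertible A" "t \<noteq> 0"
  shows "matrix_inv (t *\<^sub>R A) = (1/t) *\<^sub>R matrix_inv A"
  using assms by (intro matrix_inv_eq_left_inverse)
    (simp add: matrix_scalar_ac scalar_matrix_assoc[symmetric] matrix_inv_left)

lemma invertible_if_pos_def:
  fixes A :: "real^'n^'n"
  assumes "\<And>x. x \<noteq> 0 \<Longrightarrow> 0 < x \<bullet> (A *v x)"
  shows "invertible A"
proof -
  have "\<forall>x. A *v x = 0 \<longrightarrow> x = 0" using assms by force
  then show ?thesis using matrix_left_invertible_ker invertible_left_inverse by blast
qed

lemma symmetric_matrix_inv:
  fixes A :: "real^'n^'n"
  assumes "transpose A = A" "invertible A"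
  shows "transpose (matrix_inv A) = matrix_inv A"
proof -
  have "transpose (matrix_inv A) ** A = transpose (A ** matrix_inv A)"
    by (simp add: matrix_transpose_mul assms(1))
  then show ?thesis
    using matrix_inv_eq_left_inverse matrix_inv_right[OF assms(2)] by (metis transpose_mat)
qed

lemma pos_def_matrix_inv:
  fixes A :: "real^'n^'n"
  assumes pd: "\<And>x. x \<noteq> 0 \<Longrightarrow> 0 < x \<bullet> (A *v x)" and x: "x \<noteq> 0"
  shows "0 < x \<bullet> (matrix_inv A *v x)"
proof -
  define y where "y = matrix_inv A *v x"
  have x_eq: "x = A *v y"
    using matrix_inv_right[OF invertible_if_pos_def[OF pd]]
    by (simp add: y_def matrix_vector_mul_assoc)
  then have "y \<noteq> 0" using x by auto
  then have "0 < y \<bullet> (A *v y)" by (rule pd)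
  also have "y \<bullet> (A *v y) = x \<bullet> (matrix_inv A *v x)"
    by (metis x_eq y_def inner_commute)
  finally show ?thesis .
qed

lemma matrix_vector_mult_diagonal:
  fixes D :: "real^'n^'n"
  assumes "\<And>i j. i \<noteq> j \<Longrightarrow> D$i$j = 0"
  shows "D *v x = (\<chi> i. D$i$i * x$i)"
proof -
  have "(\<Sum>j\<in>UNIV. D$i$j * x$j) = D$i$i * x$i" for i
    by (subst sum.remove[of _ i]) (auto intro!: sum.neutral simp: assms)
  then show ?thesis by (simp add: matrix_vector_mult_def vec_eq_iff)
qed

lemma inner_diagonal_le:
  fixes S :: "real^'n^'n"
  assumes "\<And>i j. i \<noteq> j \<Longrightarrow> S$i$j = 0" "\<And>i. S$i$i \<le> 1"
  shows "x \<bullet> (S *v x) \<le> x \<bullet> x"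
proof -
  have "x \<bullet> (S *v x) = (\<Sum>i\<in>UNIV. S$i$i * (x$i * x$i))"
    by (simp add: matrix_vector_mult_diagonal[OF assms(1)] inner_vec_def mult_ac)
  also have "\<dots> \<le> (\<Sum>i\<in>UNIV. x$i * x$i)"
    using mult_right_mono[OF assms(2) zero_le_square] by (intro sum_mono) simp
  finally show ?thesis
    by (simp add: inner_vec_def)
qed

lemma norm_diagonal_matrix_vector_le:
  fixes S :: "real^'n^'n"
  assumes "\<And>i j. i \<noteq> j \<Longrightarrow> S$i$j = 0" "\<And>i. \<bar>S$i$i\<bar> \<le> 1"
  shows "norm (S *v x) \<le> norm x"
proof (rule norm_le_componentwise_cart)
  show "norm ((S *v x) $ i) \<le> norm (x $ i)" for i
    using assms(2)[of i] by (simp add: matrix_vector_mult_diagonal[OF assms(1)] abs_mult mult_left_le_one_le)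
qed

lemma norm_matrix_inv_id_plus_pos_def_lt:
  fixes P :: "real^'n^'n"
  assumes P: "\<And>x. x \<noteq> 0 \<Longrightarrow> 0 < x \<bullet> (P *v x)" and "y \<noteq> 0"
  shows "norm (matrix_inv (mat 1 + P) *v y) < norm y"
proof -
  define u where "u = matrix_inv (mat 1 + P) *v y"
  have "invertible (mat 1 + P)"
    using P by (intro invertible_if_pos_def)
      (simp add: matrix_vector_mult_add_rdistrib inner_add_right add_pos_pos)
  then have "y = (mat 1 + P) *v u"
    by (metis u_def matrix_inv_right matrix_vector_mul_assoc matrix_vector_mul_lid)
  then have y: "y = u + P *v u"
    by (simp add: matrix_vector_mult_add_rdistrib)
  then have "u \<noteq> 0" using \<open>y \<noteq> 0\<close> by auto
  then have "norm u * norm u < u \<bullet> y"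
    using P[of u] by (simp add: y inner_add_right dot_square_norm power2_eq_square)
  also have "\<dots> \<le> norm u * norm y"
    by (rule norm_cauchy_schwarz)
  finally show ?thesis
    unfolding u_def by (meson mult_left_less_imp_less norm_ge_zero)
qed

section \<open>Neumann series\<close>

lemma matpow_0 [simp]: "matpow A 0 = mat 1"
  by (simp add: matpow_def)

lemma matpow_Suc: "matpow A (Suc m) = A ** matpow A m"
  by (simp add: matpow_def)

lemma onorm_lt_1_if_strict_contraction:
  fixes A :: "real^'n^'n"
  assumes contr: "\<And>x. x \<noteq> 0 \<Longrightarrow> norm (A *v x) < norm x"
  shows "onorm ((*v) A) < 1"
proof -
  have "sphere (0::real^'n) 1 \<noteq> {}"
    using norm_axis_1[of undefined] by force
  moreover have "continuous_on (sphere 0 1) (\<lambda>x. norm (A *v x))"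
    by (intro continuous_intros)
  ultimately obtain x0 where x0: "x0 \<in> sphere 0 1"
    and max: "\<And>y. y \<in> sphere 0 1 \<Longrightarrow> norm (A *v y) \<le> norm (A *v x0)"
    using continuous_attains_sup[OF compact_sphere] by blast
  have "norm (A *v x) \<le> norm (A *v x0) * norm x" for x
  proof (cases "x = 0")
    case False
    have "norm (A *v ((1 / norm x) *\<^sub>R x)) \<le> norm (A *v x0)"
      using False by (intro max) auto
    then show ?thesis
      using False by (simp add: matrix_vector_mult_scaleR field_simps)
  qed simp
  then have "onorm ((*v) A) \<le> norm (A *v x0)"
    by (rule onorm_le)
  also have "\<dots> < 1"
    using contr[of x0] x0 by force
  finally show ?thesis .
qed

lemma onorm_matpow_le: "onorm ((*v) (matpow A m)) \<le> onorm ((*v) (A::real^'n^'n)) ^ m"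
proof (induction m)
  case 0
  show ?case using onorm_id_le by (simp add: id_def[symmetric] matrix_vector_mul_lid)
next
  case (Suc m)
  have "onorm ((*v) (matpow A (Suc m))) = onorm ((*v) A \<circ> (*v) (matpow A m))"
    by (simp add: matpow_Suc comp_def matrix_vector_mul_assoc)
  also have "\<dots> \<le> onorm ((*v) A) * onorm ((*v) (matpow A m))"
    by (intro onorm_compose matrix_vector_mul_bounded_linear)
  also have "\<dots> \<le> onorm ((*v) A) ^ Suc m"
    using Suc by (simp add: mult_left_mono onorm_pos_le matrix_vector_mul_bounded_linear)
  finally show ?case .
qed

lemma norm_matrix_le_onorm:
  fixes A :: "real^'n^'m"
  shows "norm A \<le> real CARD('m) * real CARD('n) * onorm ((*v) A)"
proof -
  have "norm A \<le> (\<Sum>i\<in>UNIV. norm (A$i))"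
    unfolding norm_vec_def by (rule L2_set_le_sum) auto
  also have "\<dots> \<le> (\<Sum>i\<in>(UNIV::'m set). \<Sum>j\<in>(UNIV::'n set). \<bar>A$i$j\<bar>)"
    by (intro sum_mono norm_le_l1_cart)
  also have "\<dots> \<le> (\<Sum>i\<in>(UNIV::'m set). \<Sum>j\<in>(UNIV::'n set). onorm ((*v) A))"
    by (intro sum_mono matrix_component_le_onorm)
  finally show ?thesis by simp
qed

lemma summable_matpow:
  fixes A :: "real^'n^'n"
  assumes "onorm ((*v) A) < 1"
  shows "summable (\<lambda>m. matpow A (Suc m))"
proof (rule summable_comparison_test')
  define C where "C = real CARD('n) * real CARD('n)"
  show "norm (matpow A (Suc m)) \<le> C * onorm ((*v) A) ^ Suc m" for m
  proof -
    have "norm (matpow A (Suc m)) \<le> C * onorm ((*v) (matpow A (Suc m)))"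
      unfolding C_def by (rule norm_matrix_le_onorm)
    also have "\<dots> \<le> C * onorm ((*v) A) ^ Suc m"
      unfolding C_def by (intro mult_left_mono onorm_matpow_le) simp
    finally show ?thesis .
  qed
  show "summable (\<lambda>m. C * onorm ((*v) A) ^ Suc m)"
    using assms onorm_pos_le[OF matrix_vector_mul_bounded_linear, of A]
    by (intro summable_mult summable_mult2 summable_geometric) (simp add: abs_of_nonneg)
qed

lemma bounded_linear_matrix_mult_left: "bounded_linear (\<lambda>X::real^'n^'m. C ** X)"
  unfolding linear_conv_bounded_linear[symmetric]
  by (intro linearI) (simp_all add: matrix_add_ldistrib matrix_scalar_ac scalar_matrix_assoc)

lemma neumann_series:
  fixes A :: "real^'n^'n"
  assumes "summable (\<lambda>m. matpow A (Suc m))"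
  shows "(mat 1 - A) ** (mat 1 + (\<Sum>m. matpow A (Suc m))) = mat 1"
proof -
  have "(\<lambda>m. - matpow A (Suc m)) \<longlonglongrightarrow> - 0"
    using assms by (intro tendsto_minus summable_LIMSEQ_zero)
  then have "(\<lambda>m. - matpow A (Suc (Suc m)) - - matpow A (Suc m)) sums (- 0 - - matpow A (Suc 0))"
    by (rule telescope_sums)
  then have "(\<lambda>m. (mat 1 - A) ** matpow A (Suc m)) sums A"
    by (simp add: matrix_diff_rdistrib matpow_Suc[of A "Suc _"] matpow_Suc[of A 0])
  moreover have "(\<lambda>m. (mat 1 - A) ** matpow A (Suc m)) sums ((mat 1 - A) ** (\<Sum>m. matpow A (Suc m)))"
    using bounded_linear.sums[OF bounded_linear_matrix_mult_left summable_sums[OF assms]] .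
  ultimately have "(mat 1 - A) ** (\<Sum>m. matpow A (Suc m)) = A"
    using sums_unique2 by blast
  then show ?thesis
    by (simp add: matrix_add_ldistrib matrix_diff_rdistrib)
qed

lemma neumann_series_resolvent:
  fixes Q W S :: "real^'n^'n"
  assumes WQ: "W ** Q = mat 1" and QW: "Q ** W = mat 1" and "invertible (W - S)"
    and summable: "summable (\<lambda>m. matpow (Q ** S) (Suc m))"
  shows "(\<Sum>m. matpow (Q ** S) (Suc m)) = matrix_inv (W - S) ** W - mat 1"
proof -
  define N where "N = (\<Sum>m. matpow (Q ** S) (Suc m))"
  have "Q ** (W - S) ** (mat 1 + N) = mat 1"
    using neumann_series[OF summable] QW
    by (simp add: N_def matrix_diff_ldistrib)
  then have "(W - S) ** (mat 1 + N) = W"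
    by (metis WQ matrix_mul_assoc matrix_mul_lid matrix_mul_rid)
  then have "matrix_inv (W - S) ** W = mat 1 + N"
    using matrix_inv_left[OF assms(3)] by (metis matrix_mul_assoc matrix_mul_lid)
  then show ?thesis
    by (simp add: N_def)
qed

lemma resolvent_identity:
  fixes Q W K S :: "real^'n^'n"
  assumes WQ: "W ** Q = mat 1" and KR: "K ** (W - S) = mat 1" and RK: "(W - S) ** K = mat 1"
  shows "(mat 1 - S) ** K ** (mat 1 - S) - (mat 1 - S)
       = (Q - mat 1) + (mat 1 - W) ** (K ** W - mat 1) ** (Q - mat 1)"
proof -
  define D where "D = mat 1 - W"
  have IS: "mat 1 - S = (W - S) + D"
    by (simp add: D_def)
  have "(mat 1 - S) ** K ** (mat 1 - S) - (mat 1 - S) = D + D ** K ** D"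
    unfolding IS using KR RK
    by (simp add: matrix_add_ldistrib matrix_add_rdistrib matrix_mul_assoc
        flip: matrix_mul_assoc[of _ K "W - S"])
  moreover have "(Q - mat 1) + D ** (K ** W - mat 1) ** (Q - mat 1) = D + D ** K ** D"
  proof -
    have "K ** W = K - K ** D"
      by (simp add: D_def matrix_diff_ldistrib)
    then have KWQ: "(K ** W - mat 1) ** (Q - mat 1) = K ** D - Q + mat 1"
      using WQ by (simp add: matrix_diff_ldistrib matrix_diff_rdistrib D_def flip: matrix_mul_assoc)
    have DQ: "D ** Q = Q - mat 1"
      using WQ by (simp add: D_def matrix_diff_rdistrib)
    have "D ** (K ** W - mat 1) ** (Q - mat 1) = D ** (K ** D - Q + mat 1)"
      by (simp only: KWQ flip: matrix_mul_assoc)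
    also have "\<dots> = D ** K ** D - (Q - mat 1) + D"
      by (simp add: matrix_add_ldistrib matrix_diff_ldistrib matrix_mul_assoc DQ)
    finally show ?thesis
      by simp
  qed
  ultimately show ?thesis
    by (simp add: D_def)
qed

lemma resolvent_neumann_expansion:
  fixes P S :: "real^'n^'n"
  assumes P: "\<And>x. x \<noteq> 0 \<Longrightarrow> 0 < x \<bullet> (P *v x)"
    and S: "\<And>i j. i \<noteq> j \<Longrightarrow> S$i$j = 0" "\<And>i. \<bar>S$i$i\<bar> \<le> 1"
  defines "Q \<equiv> matrix_inv (mat 1 + P)"
  shows "invertible (mat 1 + P - S)"
    and "summable (\<lambda>m. matpow (Q ** S) (Suc m))"
    and "(mat 1 - S) ** matrix_inv (mat 1 + P - S) ** (mat 1 - S) - (mat 1 - S)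
       = (Q - mat 1) + (mat 1 - matrix_inv Q) ** (\<Sum>m. matpow (Q ** S) (Suc m)) ** (Q - mat 1)"
proof -
  define W where "W = mat 1 + P"
  have S_le: "norm (S *v x) \<le> norm x" for x
    by (rule norm_diagonal_matrix_vector_le[OF S])
  have W_pos: "x \<bullet> x < x \<bullet> (W *v x)" if "x \<noteq> 0" for x
    using P[OF that] by (simp add: W_def matrix_vector_mult_add_rdistrib inner_add_right)
  have "invertible W"
    using W_pos by (intro invertible_if_pos_def) (meson inner_ge_zero le_less_trans)
  then have WQ: "W ** Q = mat 1" and QW: "Q ** W = mat 1"
    by (simp_all add: Q_def W_def matrix_inv_right matrix_inv_left)
  have R: "invertible (W - S)"
  proof (rule invertible_if_pos_def)
    fix x :: "real^'n" assume "x \<noteq> 0"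
    have "x \<bullet> (S *v x) \<le> x \<bullet> x"
      using S by (intro inner_diagonal_le) (auto simp: abs_le_iff)
    then show "0 < x \<bullet> ((W - S) *v x)"
      using W_pos[OF \<open>x \<noteq> 0\<close>] by (simp add: matrix_vector_mult_diff_rdistrib inner_diff_right)
  qed
  then show "invertible (mat 1 + P - S)"
    by (simp add: W_def)
  have "onorm ((*v) (Q ** S)) \<le> onorm ((*v) Q) * onorm ((*v) S)"
    using onorm_compose[OF matrix_vector_mul_bounded_linear matrix_vector_mul_bounded_linear, of Q S]
    by (simp add: comp_def matrix_vector_mul_assoc)
  also have "\<dots> \<le> onorm ((*v) Q)"
    using S_le onorm_pos_le[OF matrix_vector_mul_bounded_linear, of Q]
    by (intro mult_right_le_one_le onorm_le onorm_pos_le matrix_vector_mul_bounded_linear) simp_all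
  also have "\<dots> < 1"
    unfolding Q_def by (intro onorm_lt_1_if_strict_contraction norm_matrix_inv_id_plus_pos_def_lt P)
  finally show summable: "summable (\<lambda>m. matpow (Q ** S) (Suc m))"
    by (rule summable_matpow)
  have "matrix_inv Q = W"
    by (rule matrix_inv_eq_left_inverse[OF WQ])
  then show "(mat 1 - S) ** matrix_inv (mat 1 + P - S) ** (mat 1 - S) - (mat 1 - S)
       = (Q - mat 1) + (mat 1 - matrix_inv Q) ** (\<Sum>m. matpow (Q ** S) (Suc m)) ** (Q - mat 1)"
    using resolvent_identity[OF WQ matrix_inv_left[OF R] matrix_inv_right[OF R]]
      neumann_series_resolvent[OF WQ QW R summable]
    by (simp add: W_def)
qed

section \<open>Shifting a Gaussian vector\<close>

lemma lborel_integral_translate: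
  fixes f :: "'a::euclidean_space \<Rightarrow> real"
  assumes "f \<in> borel_measurable borel"
  shows "(\<integral>x. f (b + x) \<partial>lborel) = (\<integral>x. f x \<partial>lborel)"
  using integral_distr[of "(+) b" lborel borel f] assms by (simp add: lborel_distr_plus)

lemma borel_measurable_exp_quadratic_form:
  "(\<lambda>x::real^'n. exp (c * ((x + a) \<bullet> (L *v (x + a))))) \<in> borel_measurable borel"
  by (intro borel_measurable_continuous_onI continuous_intros
      bounded_linear.continuous_on[OF matrix_vector_mul_bounded_linear])

lemma quadratic_form_complete_square:
  fixes L P :: "real^'n^'n"
  assumes L: "transpose L = L" and P: "transpose P = P" and b: "(L + P) *v b = L *v a"
  shows "(x + a) \<bullet> (L *v (x + a)) + x \<bullet> (P *v x)
       = (a \<bullet> (L *v a) - b \<bullet> ((L + P) *v b)) + (x + b) \<bullet> ((L + P) *v (x + b))"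
proof -
  have LP: "transpose (L + P) = L + P"
    using L P by (simp add: transpose_def vec_eq_iff)
  have sym: "a \<bullet> (L *v x) = x \<bullet> (L *v a)" "b \<bullet> ((L + P) *v x) = x \<bullet> ((L + P) *v b)"
    by (metis L dot_lmul_matrix inner_commute transpose_matrix_vector)
      (metis LP dot_lmul_matrix inner_commute transpose_matrix_vector)
  have "(x + b) \<bullet> ((L + P) *v (x + b)) = x \<bullet> ((L + P) *v x) + 2 * (x \<bullet> ((L + P) *v b)) + b \<bullet> ((L + P) *v b)"
    using sym(2) by (simp add: matrix_vector_right_distrib inner_add_left inner_add_right)
  also have "x \<bullet> ((L + P) *v x) = x \<bullet> (L *v x) + x \<bullet> (P *v x)"
    by (simp add: matrix_vector_mult_add_rdistrib inner_add_right)
  finally have "(x + b) \<bullet> ((L + P) *v (x + b)) = x \<bullet> (L *v x) + x \<bullet> (P *v x) + 2 * (x \<bullet> (L *v a)) + b \<bullet> ((L + P) *v b)"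
    by (simp add: b)
  moreover have "(x + a) \<bullet> (L *v (x + a)) = x \<bullet> (L *v x) + 2 * (x \<bullet> (L *v a)) + a \<bullet> (L *v a)"
    using sym(1) by (simp add: matrix_vector_right_distrib inner_add_left inner_add_right)
  ultimately show ?thesis by simp
qed

lemma lborel_integral_gaussian_shift:
  fixes L P :: "real^'n^'n"
  assumes L: "transpose L = L" and P: "transpose P = P" and b: "(L + P) *v b = L *v a"
  shows "(\<integral>x. exp (-(1/2) * (x \<bullet> (P *v x))) * exp (-(1/2) * ((x + a) \<bullet> (L *v (x + a)))) \<partial>lborel)
       = exp (-(1/2) * (a \<bullet> (L *v a) - b \<bullet> ((L + P) *v b))) *
         (\<integral>x. exp (-(1/2) * (x \<bullet> (P *v x))) * exp (-(1/2) * (x \<bullet> (L *v x))) \<partial>lborel)"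
proof -
  define c where "c = a \<bullet> (L *v a) - b \<bullet> ((L + P) *v b)"
  define h where "h y = exp (-(1/2) * ((y + 0) \<bullet> ((L + P) *v (y + 0))))" for y :: "real^'n"
  have h_meas: "h \<in> borel_measurable borel"
    unfolding h_def by (rule borel_measurable_exp_quadratic_form)
  have h_eq: "h y = exp (-(1/2) * (y \<bullet> (P *v y))) * exp (-(1/2) * (y \<bullet> (L *v y)))" for y
    unfolding h_def mult_exp_exp by (simp add: matrix_vector_mult_add_rdistrib inner_add_right field_simps)
  have "exp (-(1/2) * (x \<bullet> (P *v x))) * exp (-(1/2) * ((x + a) \<bullet> (L *v (x + a))))
      = exp (-(1/2) * c) * h (b + x)" for x
  proof -
    have "exp (-(1/2) * (x \<bullet> (P *v x))) * exp (-(1/2) * ((x + a) \<bullet> (L *v (x + a))))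
        = exp (-(1/2) * ((x + a) \<bullet> (L *v (x + a)) + x \<bullet> (P *v x)))"
      by (simp add: mult_exp_exp distrib_left)
    also have "\<dots> = exp (-(1/2) * c) * exp (-(1/2) * ((x + b) \<bullet> ((L + P) *v (x + b))))"
      unfolding quadratic_form_complete_square[OF L P b] c_def by (simp add: mult_exp_exp distrib_left)
    finally show ?thesis by (simp add: h_def add.commute)
  qed
  then have "(\<integral>x. exp (-(1/2) * (x \<bullet> (P *v x))) * exp (-(1/2) * ((x + a) \<bullet> (L *v (x + a)))) \<partial>lborel)
      = exp (-(1/2) * c) * (\<integral>x. h (b + x) \<partial>lborel)"
    by simp
  also have "(\<integral>x. h (b + x) \<partial>lborel) = (\<integral>x. h x \<partial>lborel)"
    by (rule lborel_integral_translate[OF h_meas])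
  finally show ?thesis
    by (simp add: h_eq c_def)
qed

lemma gauss_density_pos:
  fixes \<Gamma> :: "real^'n^'n"
  assumes M: "prob_space M" and G: "distributed M lborel G (\<lambda>x. ennreal (gauss_density \<Gamma> x))"
  shows "0 < gauss_density \<Gamma> x"
proof -
  txt \<open>No need for \<open>det \<Gamma> > 0\<close>: a nonpositive normalising constant would make the law
    of \<open>G\<close> the zero measure.\<close>
  define s where "s = sqrt ((2*pi) ^ CARD('n) * det \<Gamma>)"
  have dens: "gauss_density \<Gamma> y = exp (- (1/2) * (y \<bullet> (matrix_inv \<Gamma> *v y))) / s" for y
    by (simp add: gauss_density_def s_def)
  have "0 < s"
  proof (rule ccontr)
    assume "\<not> 0 < s"
    then have "ennreal (gauss_density \<Gamma> y) = 0" for y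
      by (simp add: dens ennreal_eq_0_iff divide_nonneg_nonpos)
    then have "distr M lborel G = density lborel (\<lambda>_. 0)"
      using distributed_distr_eq_density[OF G] by simp
    then have "emeasure (distr M lborel G) UNIV = 0"
      by (simp add: emeasure_density)
    moreover have "emeasure (distr M lborel G) UNIV = 1"
      using distributed_measurable[OF G] prob_space.emeasure_space_1[OF M]
      by (subst emeasure_distr) auto
    ultimately show False by simp
  qed
  then show ?thesis by (simp add: dens)
qed

lemma gaussian_expectation_shift:
  fixes G :: "'a \<Rightarrow> real^'n" and \<Gamma> L :: "real^'n^'n"
  assumes M: "prob_space M" and G: "distributed M lborel G (\<lambda>x. ennreal (gauss_density \<Gamma> x))"
    and \<Gamma>: "transpose \<Gamma> = \<Gamma>" "invertible \<Gamma>" and L: "transpose L = L"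
    and b: "(L + matrix_inv \<Gamma>) *v b = L *v a"
  shows "(\<integral>\<omega>. exp (-(1/2) * ((G \<omega> + a) \<bullet> (L *v (G \<omega> + a)))) \<partial>M)
       = exp (-(1/2) * (a \<bullet> (L *v a) - b \<bullet> ((L + matrix_inv \<Gamma>) *v b))) *
         (\<integral>\<omega>. exp (-(1/2) * (G \<omega> \<bullet> (L *v G \<omega>))) \<partial>M)"
proof -
  define P where "P = matrix_inv \<Gamma>"
  have P: "transpose P = P" unfolding P_def by (rule symmetric_matrix_inv[OF \<Gamma>])
  define k where "k = gauss_density \<Gamma> 0"
  have dens: "gauss_density \<Gamma> x = k * exp (-(1/2) * (x \<bullet> (P *v x)))" for x
    by (simp add: gauss_density_def P_def k_def)
  have expect: "(\<integral>\<omega>. exp (-(1/2) * ((G \<omega> + c) \<bullet> (L *v (G \<omega> + c)))) \<partial>M)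
      = k * (\<integral>x. exp (-(1/2) * (x \<bullet> (P *v x))) * exp (-(1/2) * ((x + c) \<bullet> (L *v (x + c)))) \<partial>lborel)" for c
  proof -
    have "(\<integral>\<omega>. exp (-(1/2) * ((G \<omega> + c) \<bullet> (L *v (G \<omega> + c)))) \<partial>M)
        = (\<integral>x. gauss_density \<Gamma> x * exp (-(1/2) * ((x + c) \<bullet> (L *v (x + c)))) \<partial>lborel)"
    proof (rule distributed_integral[OF G, symmetric])
      show "(\<lambda>x. exp (-(1/2) * ((x + c) \<bullet> (L *v (x + c))))) \<in> borel_measurable lborel"
        unfolding measurable_lborel2 by (rule borel_measurable_exp_quadratic_form)
    qed (rule less_imp_le[OF gauss_density_pos[OF M G]])
    then show ?thesis
      by (simp only: dens mult.assoc integral_mult_right_zero)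
  qed
  show ?thesis
    using expect[of a] expect[of 0] lborel_integral_gaussian_shift[OF L P b[folded P_def]]
    by (simp add: P_def)
qed

lemma (in prob_space) integral_pos_if_pos_bounded:
  fixes f :: "'a \<Rightarrow> real"
  assumes "f \<in> borel_measurable M" "\<And>\<omega>. 0 < f \<omega>" "\<And>\<omega>. f \<omega> \<le> B"
  shows "0 < integral\<^sup>L M f"
proof -
  have "integrable M f"
    using assms by (intro integrable_const_bound[where B = B]) (auto simp: less_imp_le)
  then show ?thesis
    using integral_less_AE_space[of "\<lambda>_. 0" f] assms(2) by (simp add: emeasure_space_1)
qed

section \<open>Computing \<open>\<Phi>\<^sub>2\<close>\<close>

definition log_exp_quadratic_moment ::
    "'a measure \<Rightarrow> ('a \<Rightarrow> real^'n) \<Rightarrow> real^'n^'n \<Rightarrow> real^'n \<Rightarrow> real" where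
  "log_exp_quadratic_moment M G \<Lambda> a =
     ln (\<integral>\<omega>. exp (-(1/2) * ((G \<omega> + a) \<bullet> (\<Lambda> *v (G \<omega> + a)))) \<partial>M)"

lemma Phi_eq_log_exp_quadratic_moment:
  assumes "\<And>i j. i \<noteq> j \<Longrightarrow> S$i$j = 0"
  shows "Phi M G \<beta> t S = log_exp_quadratic_moment M G (t *\<^sub>R (mat 1 - S)) (\<chi> i. \<beta>)"
proof -
  define \<Lambda> where "\<Lambda> = t *\<^sub>R (mat 1 - S)"
  have "\<And>i j. i \<noteq> j \<Longrightarrow> \<Lambda>$i$j = 0"
    using assms by (simp add: \<Lambda>_def mat_def)
  then have "(\<Sum>i\<in>UNIV. \<Lambda>$i$i * (y$i + \<beta>)\<^sup>2) = (y + (\<chi> i. \<beta>)) \<bullet> (\<Lambda> *v (y + (\<chi> i. \<beta>)))" for y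
    by (simp add: matrix_vector_mult_diagonal inner_vec_def power2_eq_square mult_ac)
  then show ?thesis
    by (simp add: Phi_def log_exp_quadratic_moment_def Let_def \<Lambda>_def[symmetric])
qed

lemma log_exp_quadratic_moment_shift:
  fixes G :: "'a \<Rightarrow> real^'n" and \<Gamma> \<Lambda> :: "real^'n^'n"
  assumes M: "prob_space M" and G: "distributed M lborel G (\<lambda>x. ennreal (gauss_density \<Gamma> x))"
    and \<Gamma>: "transpose \<Gamma> = \<Gamma>" "\<And>x. x \<noteq> 0 \<Longrightarrow> 0 < x \<bullet> (\<Gamma> *v x)"
    and \<Lambda>: "transpose \<Lambda> = \<Lambda>" "\<And>x. 0 \<le> x \<bullet> (\<Lambda> *v x)"
  shows "log_exp_quadratic_moment M G \<Lambda> a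
       = log_exp_quadratic_moment M G \<Lambda> 0
         + 1/2 * (a \<bullet> ((\<Lambda> ** matrix_inv (\<Lambda> + matrix_inv \<Gamma>) ** \<Lambda> - \<Lambda>) *v a))"
proof -
  define A where "A = \<Lambda> + matrix_inv \<Gamma>"
  define b where "b = matrix_inv A *v (\<Lambda> *v a)"
  have "invertible A"
    unfolding A_def using \<Lambda>(2) pos_def_matrix_inv[OF \<Gamma>(2)]
    by (intro invertible_if_pos_def) (simp add: matrix_vector_mult_add_rdistrib inner_add_right add_nonneg_pos)
  then have b: "A *v b = \<Lambda> *v a"
    by (metis b_def matrix_inv_right matrix_vector_mul_assoc matrix_vector_mul_lid)
  have "b \<bullet> (A *v b) = a \<bullet> ((\<Lambda> ** matrix_inv A ** \<Lambda>) *v a)"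
    by (metis b b_def \<Lambda>(1) dot_lmul_matrix inner_commute transpose_matrix_vector matrix_vector_mul_assoc)
  then have c: "a \<bullet> (\<Lambda> *v a) - b \<bullet> (A *v b) = - (a \<bullet> ((\<Lambda> ** matrix_inv A ** \<Lambda> - \<Lambda>) *v a))"
    by (simp add: matrix_vector_mult_diff_rdistrib inner_diff_right)
  define E0 where "E0 = (\<integral>\<omega>. exp (-(1/2) * (G \<omega> \<bullet> (\<Lambda> *v G \<omega>))) \<partial>M)"
  have "0 < E0"
    unfolding E0_def
  proof (rule prob_space.integral_pos_if_pos_bounded[OF M])
    show "(\<lambda>\<omega>. exp (-(1/2) * (G \<omega> \<bullet> (\<Lambda> *v G \<omega>)))) \<in> borel_measurable M"
      using borel_measurable_exp_quadratic_form[of "-(1/2)" 0 \<Lambda>] distributed_measurable[OF G]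
      by (simp add: measurable_compose[of G])
    show "exp (-(1/2) * (G \<omega> \<bullet> (\<Lambda> *v G \<omega>))) \<le> 1" for \<omega>
      using \<Lambda>(2)[of "G \<omega>"] by simp
  qed simp
  have "(\<integral>\<omega>. exp (-(1/2) * ((G \<omega> + a) \<bullet> (\<Lambda> *v (G \<omega> + a)))) \<partial>M)
      = exp (1/2 * (a \<bullet> ((\<Lambda> ** matrix_inv A ** \<Lambda> - \<Lambda>) *v a))) * E0"
    using gaussian_expectation_shift[OF M G \<Gamma>(1) _ \<Lambda>(1) b[unfolded A_def]]
      invertible_if_pos_def[OF \<Gamma>(2)] c unfolding E0_def A_def by simp
  then show ?thesis
    using \<open>0 < E0\<close> by (simp add: log_exp_quadratic_moment_def ln_mult E0_def A_def)
qed

lemma Phi2_eq_resolvent: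
  fixes G :: "'a \<Rightarrow> real^'n" and \<Gamma> S :: "real^'n^'n"
  assumes M: "prob_space M" and G: "distributed M lborel G (\<lambda>x. ennreal (gauss_density \<Gamma> x))"
    and \<Gamma>: "transpose \<Gamma> = \<Gamma>" "\<And>x. x \<noteq> 0 \<Longrightarrow> 0 < x \<bullet> (\<Gamma> *v x)"
    and "0 < t" and S: "\<And>i j. i \<noteq> j \<Longrightarrow> S$i$j = 0" "\<And>i. S$i$i \<le> 1"
    and R: "invertible (mat 1 + matrix_inv (t *\<^sub>R \<Gamma>) - S)"
  shows "Phi2 M G \<alpha> t S = \<alpha>\<^sup>2 * t / 2 * ((\<chi> i. 1) \<bullet>
           (((mat 1 - S) ** matrix_inv (mat 1 + matrix_inv (t *\<^sub>R \<Gamma>) - S) ** (mat 1 - S) - (mat 1 - S))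
            *v (\<chi> i. 1)))"
proof -
  define \<Lambda> where "\<Lambda> = t *\<^sub>R (mat 1 - S)"
  define R where "R = mat 1 + matrix_inv (t *\<^sub>R \<Gamma>) - S"
  define X where "X = (mat 1 - S) ** matrix_inv R ** (mat 1 - S) - (mat 1 - S)"
  have "invertible \<Gamma>"
    using \<Gamma>(2) by (rule invertible_if_pos_def)
  have \<Lambda>_sym: "transpose \<Lambda> = \<Lambda>"
    using S(1) by (simp add: \<Lambda>_def transpose_def mat_def vec_eq_iff)
  have \<Lambda>_nonneg: "0 \<le> x \<bullet> (\<Lambda> *v x)" for x
    using inner_diagonal_le[OF S, of x] \<open>0 < t\<close>
    by (simp add: \<Lambda>_def scaleR_matrix_vector_assoc[symmetric] matrix_vector_mult_diff_rdistrib inner_diff_right)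
  have "\<Lambda> + matrix_inv \<Gamma> = t *\<^sub>R R"
    using \<open>0 < t\<close> by (simp add: \<Lambda>_def R_def matrix_inv_scaleR[OF \<open>invertible \<Gamma>\<close>] algebra_simps)
  then have "matrix_inv (\<Lambda> + matrix_inv \<Gamma>) = (1/t) *\<^sub>R matrix_inv R"
    using \<open>0 < t\<close> R by (simp add: matrix_inv_scaleR flip: R_def)
  then have "\<Lambda> ** matrix_inv (\<Lambda> + matrix_inv \<Gamma>) ** \<Lambda> = t *\<^sub>R ((mat 1 - S) ** matrix_inv R ** (mat 1 - S))"
    using \<open>0 < t\<close> by (simp add: \<Lambda>_def matrix_scalar_ac scalar_matrix_assoc[symmetric])
  then have "\<Lambda> ** matrix_inv (\<Lambda> + matrix_inv \<Gamma>) ** \<Lambda> - \<Lambda> = t *\<^sub>R X"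
    by (simp add: X_def \<Lambda>_def scaleR_diff_right)
  moreover have "(\<chi> i. 0) = (0 :: real^'n)"
    by (simp add: vec_eq_iff)
  ultimately have "Phi2 M G \<alpha> t S = 1/2 * ((\<chi> i. \<alpha>) \<bullet> ((t *\<^sub>R X) *v (\<chi> i. \<alpha>)))"
    using log_exp_quadratic_moment_shift[OF M G \<Gamma> \<Lambda>_sym \<Lambda>_nonneg, of "\<chi> i. \<alpha>"]
    by (simp add: Phi2_def Phi_eq_log_exp_quadratic_moment[OF S(1)] \<Lambda>_def[symmetric])
  also have "(\<chi> i. \<alpha>) = \<alpha> *\<^sub>R (\<chi> i. (1::real))"
    by (simp add: vec_eq_iff)
  finally show ?thesis
    by (simp add: X_def R_def matrix_vector_mult_scaleR power2_eq_square flip: scaleR_matrix_vector_assoc)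
qed

theorem lemma2p1:
  fixes M :: "'a measure" and G :: "'a \<Rightarrow> real^'n" and \<Gamma> :: "real^'n^'n" and \<alpha> :: real
  assumes "prob_space M"
    and "transpose \<Gamma> = \<Gamma>"
    and "\<forall>x. x \<noteq> 0 \<longrightarrow> x \<bullet> (\<Gamma> *v x) > 0"
    and "distributed M lborel G (\<lambda>x. ennreal (gauss_density \<Gamma> x))"
  shows "\<exists>T. \<forall>t > T. \<forall>S :: real^'n^'n.
           (\<forall>i j. i \<noteq> j \<longrightarrow> S$i$j = 0) \<and> (\<forall>i. 0 \<le> S$i$i \<and> S$i$i \<le> 1) \<longrightarrow>
           (let Q = matrix_inv (mat 1 + matrix_inv (t *\<^sub>R \<Gamma>));
                ones = (\<chi> i. (1::real))
            in summable (\<lambda>m. matpow (Q ** S) (Suc m)) \<and>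
               Phi2 M G \<alpha> t S =
                 \<alpha>\<^sup>2 * t / 2 *
                 (ones \<bullet> (((Q - mat 1) + (mat 1 - matrix_inv Q) ** (\<Sum>m. matpow (Q ** S) (Suc m)) ** (Q - mat 1)) *v ones)))"
proof (intro exI[of _ 0] allI impI)
  fix t :: real and S :: "real^'n^'n"
  assume "t > 0" and "(\<forall>i j. i \<noteq> j \<longrightarrow> S$i$j = 0) \<and> (\<forall>i. 0 \<le> S$i$i \<and> S$i$i \<le> 1)"
  then have t: "0 < t" and S: "\<And>i j. i \<noteq> j \<Longrightarrow> S$i$j = 0" "\<And>i. \<bar>S$i$i\<bar> \<le> 1" "\<And>i. S$i$i \<le> 1"
    by auto
  have \<Gamma>: "\<And>x. x \<noteq> 0 \<Longrightarrow> 0 < x \<bullet> (\<Gamma> *v x)"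
    using assms(3) by blast
  have t\<Gamma>: "\<And>x. x \<noteq> 0 \<Longrightarrow> 0 < x \<bullet> (matrix_inv (t *\<^sub>R \<Gamma>) *v x)"
    using \<Gamma> t by (intro pos_def_matrix_inv) (simp_all flip: scaleR_matrix_vector_assoc)
  define Q where "Q = matrix_inv (mat 1 + matrix_inv (t *\<^sub>R \<Gamma>))"
  have "invertible (mat 1 + matrix_inv (t *\<^sub>R \<Gamma>) - S)"
    using t\<Gamma> S(1,2) by (rule resolvent_neumann_expansion(1))
  then have "Phi2 M G \<alpha> t S = \<alpha>\<^sup>2 * t / 2 * ((\<chi> i. 1) \<bullet>
      (((mat 1 - S) ** matrix_inv (mat 1 + matrix_inv (t *\<^sub>R \<Gamma>) - S) ** (mat 1 - S) - (mat 1 - S))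
       *v (\<chi> i. 1)))"
    using assms(1,4,2) \<Gamma> t S(1,3) by (intro Phi2_eq_resolvent)
  moreover have "(mat 1 - S) ** matrix_inv (mat 1 + matrix_inv (t *\<^sub>R \<Gamma>) - S) ** (mat 1 - S) - (mat 1 - S)
      = (Q - mat 1) + (mat 1 - matrix_inv Q) ** (\<Sum>m. matpow (Q ** S) (Suc m)) ** (Q - mat 1)"
    using t\<Gamma> S(1,2) unfolding Q_def by (rule resolvent_neumann_expansion(3))
  moreover have "summable (\<lambda>m. matpow (Q ** S) (Suc m))"
    using t\<Gamma> S(1,2) unfolding Q_def by (rule resolvent_neumann_expansion(2))
  ultimately show "let Q = matrix_inv (mat 1 + matrix_inv (t *\<^sub>R \<Gamma>)); ones = (\<chi> i. (1::real))
    in summable (\<lambda>m. matpow (Q ** S) (Suc m)) \<and>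
       Phi2 M G \<alpha> t S = \<alpha>\<^sup>2 * t / 2 *
         (ones \<bullet> (((Q - mat 1) + (mat 1 - matrix_inv Q) ** (\<Sum>m. matpow (Q ** S) (Suc m)) ** (Q - mat 1)) *v ones))"
    unfolding Let_def Q_def[symmetric] by simp
qed

end
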